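(* Let $N\ge1$, $\eta_S,\eta_{FS}\in\mathbb{R}$ and $q\in(0,1)$. For $\eta_F\in\mathbb{R}$, let $(X_1,\dots,X_N)\in\{0,1\}^N$ have distribution $$\Pr(X_1=x_1,\dots,X_N=x_N)=\frac{1}{Z_1}\Big(e^{\eta_F\sum_ix_i}+e^{\eta_S+(\eta_{FS}+\eta_F)\sum_ix_i}\Big),\qquad Z_1=(1+e^{\eta_F})^N+e^{\eta_S}(1+e^{\eta_F+\eta_{FS}})^N.$$ Define $g(y)=\big(1-\frac{1-q}{q}y\big)(1+y)^{N-1}$. Then a value $\eta_F^*\in\mathbb{R}$ gives $\Pr(X_1=1)=q$ if and only if $$g\big(e^{\eta_F^*}\big)+e^{\eta_S}\,g\big(e^{\eta_{FS}}e^{\eta_F^*}\big)=0.$$ *)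

theory Defs
  imports "HOL-Analysis.Analysis"
begin

text \<open>Configurations (x_1,...,x_N) in {0,1}^N, indexed 0..N-1 (index 0 is X_1),
  represented as extensional functions on {..<N}.\<close>
definition configs :: "nat \<Rightarrow> (nat \<Rightarrow> nat) set" where
  "configs N = PiE {..<N} (\<lambda>_. {0, 1})"

definition weight :: "nat \<Rightarrow> real \<Rightarrow> real \<Rightarrow> real \<Rightarrow> (nat \<Rightarrow> nat) \<Rightarrow> real" where
  "weight N eta_S eta_FS eta_F x =
     exp (eta_F * real (\<Sum>i<N. x i)) + exp (eta_S + (eta_FS + eta_F) * real (\<Sum>i<N. x i))"

definition Z1 :: "nat \<Rightarrow> real \<Rightarrow> real \<Rightarrow> real \<Rightarrow> real" where
  "Z1 N eta_S eta_FS eta_F =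
     (1 + exp eta_F) ^ N + exp eta_S * (1 + exp (eta_F + eta_FS)) ^ N"

definition prob_config :: "nat \<Rightarrow> real \<Rightarrow> real \<Rightarrow> real \<Rightarrow> (nat \<Rightarrow> nat) \<Rightarrow> real" where
  "prob_config N eta_S eta_FS eta_F x = weight N eta_S eta_FS eta_F x / Z1 N eta_S eta_FS eta_F"

definition prob_X1 :: "nat \<Rightarrow> real \<Rightarrow> real \<Rightarrow> real \<Rightarrow> real" where
  "prob_X1 N eta_S eta_FS eta_F =
     (\<Sum>x\<in>{x \<in> configs N. x 0 = 1}. prob_config N eta_S eta_FS eta_F x)"

definition g :: "nat \<Rightarrow> real \<Rightarrow> real \<Rightarrow> real" where
  "g N q y = (1 - (1 - q) / q * y) * (1 + y) ^ (N - 1)"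

end

theory Submission
  imports Defs
begin

text \<open>The weight of a configuration depends only on its number k of ones, through
  (exp \<eta>)^k, so the sum over {0,1}^N with x_1 = 1 factorises: with y = exp \<eta>_F,
  w = exp (\<eta>_F + \<eta>_FS) and s = exp \<eta>_S,
  Pr(X_1 = 1) = (y (1+y)^(N-1) + s w (1+w)^(N-1)) / ((1+y)^N + s (1+w)^N).
  Since q g(u) = q (1+u)^N - u (1+u)^(N-1), clearing the positive denominator yields q times
  the stated equation; only q \<noteq> 0 is needed.\<close>

lemma sum_PiE_power_sum:
  fixes a :: "'a::comm_semiring_1"
  assumes "finite I" and "\<And>i. i \<in> I \<Longrightarrow> finite (A i)"
  shows "(\<Sum>x\<in>PiE I A. a ^ (\<Sum>i\<in>I. x i)) = (\<Prod>i\<in>I. \<Sum>v\<in>A i. a ^ v)"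
  by (simp add: power_sum prod_sum_PiE[OF assms])

lemma configs_first_one_eq_PiE:
  assumes "N \<ge> 1"
  shows "{x \<in> configs N. x 0 = 1} = PiE {..<N} (\<lambda>i. if i = 0 then {1} else {0, 1})"
  (is "?L = ?R")
proof (intro equalityI subsetI)
  fix x assume "x \<in> ?L"
  then show "x \<in> ?R" by (simp add: configs_def PiE_iff)
next
  fix x assume x: "x \<in> ?R"
  have "x 0 = 1" using PiE_mem[OF x, of 0] assms by simp
  moreover have "x \<in> configs N"
    using x unfolding configs_def by (rule subsetD[OF PiE_mono, rotated]) auto
  ultimately show "x \<in> ?L" by simp
qed

lemma sum_configs_first_one_power:
  fixes a :: "'a::comm_semiring_1"
  assumes "N \<ge> 1"
  shows "(\<Sum>x\<in>{x \<in> configs N. x 0 = 1}. a ^ (\<Sum>i<N. x i)) = a * (1 + a) ^ (N - 1)"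
proof -
  obtain M where N: "N = Suc M" using assms by (cases N) auto
  have "(\<Sum>x\<in>{x \<in> configs N. x 0 = 1}. a ^ (\<Sum>i<N. x i))
      = (\<Prod>i<N. \<Sum>v\<in>(if i = 0 then {1} else {0, 1}). a ^ v)"
    unfolding configs_first_one_eq_PiE[OF assms] by (rule sum_PiE_power_sum) auto
  also have "\<dots> = a * (1 + a) ^ (N - 1)"
    unfolding N by (subst prod.lessThan_Suc_shift) simp
  finally show ?thesis .
qed

lemma exp_mult_of_nat_eq_power: "exp (c * real k) = exp c ^ k"
  by (simp add: exp_of_nat_mult[symmetric] mult.commute)

lemma prob_X1_eq:
  fixes eta_S eta_FS eta_F :: real
  assumes "N \<ge> 1"
  defines "y \<equiv> exp eta_F" and "w \<equiv> exp (eta_F + eta_FS)"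
  shows "prob_X1 N eta_S eta_FS eta_F
    = (y * (1 + y) ^ (N - 1) + exp eta_S * (w * (1 + w) ^ (N - 1)))
      / ((1 + y) ^ N + exp eta_S * (1 + w) ^ N)"
proof -
  have "weight N eta_S eta_FS eta_F x = y ^ (\<Sum>i<N. x i) + exp eta_S * w ^ (\<Sum>i<N. x i)" for x
    unfolding weight_def y_def w_def exp_mult_of_nat_eq_power[symmetric] exp_add[symmetric]
    by (simp add: add.commute)
  then have "(\<Sum>x\<in>{x \<in> configs N. x 0 = 1}. weight N eta_S eta_FS eta_F x)
      = (\<Sum>x\<in>{x \<in> configs N. x 0 = 1}. y ^ (\<Sum>i<N. x i))
        + exp eta_S * (\<Sum>x\<in>{x \<in> configs N. x 0 = 1}. w ^ (\<Sum>i<N. x i))"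
    by (simp add: sum.distrib sum_distrib_left)
  also have "\<dots> = y * (1 + y) ^ (N - 1) + exp eta_S * (w * (1 + w) ^ (N - 1))"
    by (simp only: sum_configs_first_one_power[OF assms(1)])
  finally show ?thesis
    by (simp add: prob_X1_def prob_config_def Z1_def y_def w_def sum_divide_distrib[symmetric])
qed

lemma q_mult_g:
  assumes "N \<ge> 1" and "q \<noteq> 0"
  shows "q * g N q u = q * (1 + u) ^ N - u * (1 + u) ^ (N - 1)"
proof -
  have "(1 + u) ^ N = (1 + u) * (1 + u) ^ (N - 1)"
    using assms(1) by (simp add: power_Suc[symmetric])
  then show ?thesis
    unfolding g_def using assms(2) by (simp add: field_simps)
qed

lemma q_mult_g_combination:
  assumes "N \<ge> 1" and "q \<noteq> 0"
  shows "q * (g N q y + s * g N q w)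
    = q * ((1 + y) ^ N + s * (1 + w) ^ N) - (y * (1 + y) ^ (N - 1) + s * (w * (1 + w) ^ (N - 1)))"
proof -
  have "q * (g N q y + s * g N q w) = q * g N q y + s * (q * g N q w)"
    by (simp add: algebra_simps)
  also have "\<dots> = (q * (1 + y) ^ N - y * (1 + y) ^ (N - 1))
                   + s * (q * (1 + w) ^ N - w * (1 + w) ^ (N - 1))"
    by (simp only: q_mult_g[OF assms])
  finally show ?thesis
    by (simp add: algebra_simps)
qed

theorem proposition5:
  fixes N :: nat and eta_S eta_FS q eta_F_star :: real
  assumes "N \<ge> 1" and "0 < q" and "q < 1"
  shows "prob_X1 N eta_S eta_FS eta_F_star = q \<longleftrightarrow>
         g N q (exp eta_F_star) + exp eta_S * g N q (exp eta_FS * exp eta_F_star) = 0"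
proof -
  define y where "y = exp eta_F_star"
  define w where "w = exp (eta_F_star + eta_FS)"
  define s where "s = exp eta_S"
  have "q \<noteq> 0"
    using assms(2) by simp
  have "(1 + y) ^ N + s * (1 + w) ^ N > 0"
    by (simp add: y_def w_def s_def add_pos_pos)
  then have "prob_X1 N eta_S eta_FS eta_F_star = q \<longleftrightarrow>
        y * (1 + y) ^ (N - 1) + s * (w * (1 + w) ^ (N - 1)) = q * ((1 + y) ^ N + s * (1 + w) ^ N)"
    by (simp add: prob_X1_eq[OF assms(1)] divide_eq_eq y_def w_def s_def)
  also have "\<dots> \<longleftrightarrow> q * (g N q y + s * g N q w) = 0"
    by (simp only: q_mult_g_combination[OF assms(1) \<open>q \<noteq> 0\<close>] right_minus_eq)
      (rule eq_commute)
  also have "\<dots> \<longleftrightarrow> g N q y + s * g N q w = 0"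
    using \<open>q \<noteq> 0\<close> by simp
  finally show ?thesis
    by (simp add: y_def w_def s_def exp_add mult.commute)
qed

end
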